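(* Let $G$ be any GP 2 host graph in which every node is marked grey and is not a root and every edge is unmarked, with $n$ nodes and $m$ edges. When the GP 2 program is-dag is executed on $G$ (via the GP 2-to-C compiler, under the cost model below), it terminates in time $\mathrm{O}(n+m)$, i.e. linear in the size of $G$.
   Context: GP 2 semantics. Host graphs are finite directed graphs whose nodes and edges carry labels (lists of integers and strings) and marks (nodes: unmarked, red, green, blue, grey; edges: unmarked, red, green, blue, dashed); some nodes are roots. A rule is applied by finding an injective label- and mark-compatible match of its left-hand side (mark "any" matches every mark; roots match roots) satisfying the dangling condition, then changing matched items as prescribed by the right-hand side. Commands: a rule set call applies one applicable rule, failing if none applies; $P;Q$ sequencing; $P!$ iterates $P$ until it fails (break exits the innermost loop); "try $C$ then $P$ else $Q$" runs $C$ and continues with $P$ on its result if it succeeded, else $Q$ on the original graph; "if $C$ then $P$ else $Q$" runs $C$ on a copy then $P$ or $Q$ on the original; fail causes failure. Cost model (updated GP 2-to-C compiler). Host nodes are stored in separate linked lists per node mark, roots in a list, and each node has a two-dimensional array of linked lists of incident edges indexed by edge mark and orientation (incoming, outgoing, loop). Each elementary operation takes constant time: fetch first/next node with a given mark; fetch first/next root; given a node, fetch first/next incoming, outgoing or loop edge with a given mark; read degrees, mark, root status, source, target; set/clear/test a "matched" flag. Matching is a search using these operations; completing a rule application once a match is found takes constant time for rules that only change marks/roots. Running time is the total cost; the size of $G$ is $n+m$. The program is-dag (labels unchanged; rule edges directed from node 1 to node 2): Main = (init; DFS!; try unroot else break)!; Check DFS = try next_edge then (try {move, ignore} else (set_flag;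 break)) else (try loop; try back else break) Check = if flag then fail - init: grey non-root node becomes a red root. - unroot: red root becomes blue non-root. - set_flag: red root becomes green root. - flag: green root; no change. - next_edge: red root 1, node 2 of any mark, unmarked edge 1→2; edge becomes red. - ignore: red root 1, blue node 2, red edge 1→2; edge becomes blue. - move: red root 1, grey node 2, red edge 1→2; node 1 becomes red non-root, node 2 red root, edge dashed. - back: red non-root 1, red root 2, dashed edge 1→2; node 1 becomes red root, node 2 blue non-root, edge blue. - loop: red root with an unmarked loop; node becomes green root. *)

theory Defs
  imports Main
begin

text \<open>Labels are omitted: every rule of is-dag matches arbitrary labels and leaves
them unchanged, so labels influence neither matching nor cost.\<close>

datatype nmark = NUnm | NRed | NGreen | NBlue | NGrey
datatype emark = EUnm | ERed | EGreen | EBlue | EDashed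
datatype orient = InE | OutE | LoopE

text \<open>The abstract host graph (nodes, edges, source, target, marks, root flags)
together with the compiler's linked lists: one node list per node mark, a root list,
and per node a two-dimensional array of incident-edge lists indexed by edge mark and
orientation.  Lists are modelled by HOL lists (order = traversal order).\<close>

record hstate =
  V    :: "nat set"
  E    :: "nat set"
  src  :: "nat \<Rightarrow> nat"
  tgt  :: "nat \<Rightarrow> nat"
  nmk  :: "nat \<Rightarrow> nmark"
  emk  :: "nat \<Rightarrow> emark"
  rt   :: "nat \<Rightarrow> bool"
  nlist :: "nmark \<Rightarrow> nat list"
  rlist :: "nat list"
  elist :: "nat \<Rightarrow> emark \<Rightarrow> orient \<Rightarrow> nat list"

definition valid_rep :: "hstate \<Rightarrow> bool" where
  "valid_rep s \<longleftrightarrow>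
     finite (V s) \<and> finite (E s) \<and>
     (\<forall>e\<in>E s. src s e \<in> V s \<and> tgt s e \<in> V s) \<and>
     (\<forall>k. distinct (nlist s k) \<and> set (nlist s k) = {v\<in>V s. nmk s v = k}) \<and>
     distinct (rlist s) \<and> set (rlist s) = {v\<in>V s. rt s v} \<and>
     (\<forall>v\<in>V s. \<forall>k.
        distinct (elist s v k OutE) \<and>
        set (elist s v k OutE) = {e\<in>E s. src s e = v \<and> tgt s e \<noteq> v \<and> emk s e = k} \<and>
        distinct (elist s v k InE) \<and>
        set (elist s v k InE) = {e\<in>E s. tgt s e = v \<and> src s e \<noteq> v \<and> emk s e = k} \<and>
        distinct (elist s v k LoopE) \<and>
        set (elist s v k LoopE) = {e\<in>E s. src s e = v \<and> tgt s e = v \<and> emk s e = k})"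

subsection \<open>Constant-time updates (relinking in the lists; new position = front)\<close>

definition set_nmark :: "nat \<Rightarrow> nmark \<Rightarrow> hstate \<Rightarrow> hstate" where
  "set_nmark v k s = s\<lparr>nlist := (nlist s)(nmk s v := removeAll v (nlist s (nmk s v)),
                                          k := v # removeAll v (nlist s k)),
                        nmk := (nmk s)(v := k)\<rparr>"

definition set_root :: "nat \<Rightarrow> bool \<Rightarrow> hstate \<Rightarrow> hstate" where
  "set_root v b s = s\<lparr>rt := (rt s)(v := b),
                       rlist := (if b then v # removeAll v (rlist s) else removeAll v (rlist s))\<rparr>"

definition modl :: "(nat \<Rightarrow> emark \<Rightarrow> orient \<Rightarrow> nat list) \<Rightarrow> nat \<Rightarrow> emark \<Rightarrow> orient
                    \<Rightarrow> (nat list \<Rightarrow> nat list) \<Rightarrow> (nat \<Rightarrow> emark \<Rightarrow> orient \<Rightarrow> nat list)" where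
  "modl el v k d f = el(v := (el v)(k := (el v k)(d := f (el v k d))))"

definition set_emark :: "nat \<Rightarrow> emark \<Rightarrow> hstate \<Rightarrow> hstate" where
  "set_emark e k s =
     (let a = src s e; b = tgt s e; k0 = emk s e; el = elist s in
      s\<lparr>elist := (if a = b then modl (modl el a k0 LoopE (removeAll e)) a k LoopE (Cons e)
                  else modl (modl (modl (modl el a k0 OutE (removeAll e)) a k OutE (Cons e))
                                  b k0 InE (removeAll e)) b k InE (Cons e)),
        emk := (emk s)(e := k)\<rparr>)"

text \<open>Traversing a linked list: every fetch (including the final fetch returning
null) costs 1; the candidate test returns its own cost.\<close>

fun find :: "('a \<Rightarrow> 'b option \<times> nat) \<Rightarrow> 'a list \<Rightarrow> 'b option \<times> nat" where
  "find f [] = (None, 1)"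
| "find f (x # xs) =
     (case f x of
        (Some r, c) \<Rightarrow> (Some r, Suc c)
      | (None, c) \<Rightarrow> (case find f xs of (r, c') \<Rightarrow> (r, Suc (c + c'))))"

text \<open>Completing a rule application after a match is found costs a constant (1).\<close>

fun apply_m :: "'m option \<times> nat \<Rightarrow> ('m \<Rightarrow> hstate) \<Rightarrow> hstate option \<times> nat" where
  "apply_m (Some x, c) g = (Some (g x), Suc c)"
| "apply_m (None, c) g = (None, c)"

type_synonym rule = "hstate \<Rightarrow> hstate option \<times> nat"

text \<open>Search plans as generated by the compiler: root nodes of the LHS are
searched first via the root list, the remaining items are reached by following
incident edges; a non-root LHS node without root node is found via the node list of
its mark.\<close>

definition root_with :: "nmark \<Rightarrow> hstate \<Rightarrow> nat option \<times> nat" where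
  "root_with k s = find (\<lambda>v. (if nmk s v = k then Some v else None, 1)) (rlist s)"

definition red_root_out :: "emark \<Rightarrow> (nat \<Rightarrow> bool) \<Rightarrow> hstate \<Rightarrow> (nat \<times> nat) option \<times> nat" where
  "red_root_out ek P s =
     find (\<lambda>v. if nmk s v = NRed then
                  (case find (\<lambda>e. (if tgt s e \<noteq> v \<and> P (tgt s e) then Some (v, e) else None, 1))
                             (elist s v ek OutE) of (r, c) \<Rightarrow> (r, Suc c))
                else (None, 1)) (rlist s)"

definition r_init :: rule where
  "r_init s = apply_m (find (\<lambda>v. (Some v, 1)) (nlist s NGrey))
                      (\<lambda>v. set_root v True (set_nmark v NRed s))"

definition r_unroot :: rule where
  "r_unroot s = apply_m (root_with NRed s) (\<lambda>v. set_root v False (set_nmark v NBlue s))"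

definition r_set_flag :: rule where
  "r_set_flag s = apply_m (root_with NRed s) (\<lambda>v. set_nmark v NGreen s)"

definition r_flag :: rule where
  "r_flag s = apply_m (root_with NGreen s) (\<lambda>v. s)"

definition r_next_edge :: rule where
  "r_next_edge s = apply_m (red_root_out EUnm (\<lambda>w. True) s) (\<lambda>(v, e). set_emark e ERed s)"

definition r_ignore :: rule where
  "r_ignore s = apply_m (red_root_out ERed (\<lambda>w. nmk s w = NBlue) s) (\<lambda>(v, e). set_emark e EBlue s)"

definition r_move :: rule where
  "r_move s = apply_m (red_root_out ERed (\<lambda>w. nmk s w = NGrey) s)
     (\<lambda>(v, e). set_emark e EDashed (set_root (tgt s e) True (set_nmark (tgt s e) NRed
                (set_root v False s))))"

definition r_back :: rule where
  "r_back s = apply_m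
     (find (\<lambda>w. if nmk s w = NRed then
                  (case find (\<lambda>e. (if src s e \<noteq> w \<and> nmk s (src s e) = NRed
                                    then Some (src s e, w, e) else None, 1))
                             (elist s w EDashed InE) of (r, c) \<Rightarrow> (r, Suc c))
                else (None, 1)) (rlist s))
     (\<lambda>(v, w, e). set_emark e EBlue (set_root w False (set_nmark w NBlue (set_root v True s))))"

definition r_loop :: rule where
  "r_loop s = apply_m
     (find (\<lambda>v. if nmk s v = NRed then
                  (case find (\<lambda>e. (Some (v, e), 1)) (elist s v EUnm LoopE) of (r, c) \<Rightarrow> (r, Suc c))
                else (None, 1)) (rlist s))
     (\<lambda>(v, e). set_nmark v NGreen s)"

fun apply_rs :: "rule list \<Rightarrow> hstate \<Rightarrow> hstate option \<times> nat" where
  "apply_rs [] s = (None, 0)"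
| "apply_rs (r # rs) s =
     (case r s of
        (Some s', c) \<Rightarrow> (Some s', c)
      | (None, c) \<Rightarrow> (case apply_rs rs s of (x, c') \<Rightarrow> (x, c + c')))"

datatype cmd = Call "rule list" | Seq cmd cmd | Loop cmd | Try cmd cmd cmd | If cmd cmd cmd
  | Skip | Fail | Break

datatype outcome = ROk hstate | RFail | RBrk hstate

definition addc :: "nat \<Rightarrow> (outcome \<times> nat) option \<Rightarrow> (outcome \<times> nat) option" where
  "addc c x = map_option (\<lambda>(r, c'). (r, c + c')) x"

text \<open>Fuel-indexed interpreter: None means out of fuel.  Restoring the graph after a failed condition of try / if, or
after a failed loop body, is charged the cost of the undone computation again
(an upper bound for undoing the recorded changes).\<close>

fun exec :: "nat \<Rightarrow> cmd \<Rightarrow> hstate \<Rightarrow> (outcome \<times> nat) option" where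
  "exec 0 _ _ = None"
| "exec (Suc f) Skip s = Some (ROk s, 1)"
| "exec (Suc f) Fail s = Some (RFail, 1)"
| "exec (Suc f) Break s = Some (RBrk s, 1)"
| "exec (Suc f) (Call rs) s =
     (case apply_rs rs s of (Some s', c) \<Rightarrow> Some (ROk s', Suc c) | (None, c) \<Rightarrow> Some (RFail, Suc c))"
| "exec (Suc f) (Seq P Q) s =
     (case exec f P s of
        None \<Rightarrow> None
      | Some (ROk s', c) \<Rightarrow> addc c (exec f Q s')
      | Some (r, c) \<Rightarrow> Some (r, c))"
| "exec (Suc f) (Loop P) s =
     (case exec f P s of
        None \<Rightarrow> None
      | Some (ROk s', c) \<Rightarrow> addc (Suc c) (exec f (Loop P) s')
      | Some (RFail, c) \<Rightarrow> Some (ROk s, Suc (2 * c))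
      | Some (RBrk s', c) \<Rightarrow> Some (ROk s', Suc c))"
| "exec (Suc f) (Try C P Q) s =
     (case exec f C s of
        None \<Rightarrow> None
      | Some (ROk s', c) \<Rightarrow> addc (Suc c) (exec f P s')
      | Some (RFail, c) \<Rightarrow> addc (Suc (2 * c)) (exec f Q s)
      | Some (RBrk s', c) \<Rightarrow> Some (RBrk s', Suc c))"
| "exec (Suc f) (If C P Q) s =
     (case exec f C s of
        None \<Rightarrow> None
      | Some (RFail, c) \<Rightarrow> addc (Suc (2 * c)) (exec f Q s)
      | Some (_, c) \<Rightarrow> addc (Suc (2 * c)) (exec f P s))"

definition DFS :: cmd where
  "DFS = Try (Call [r_next_edge])
             (Try (Call [r_move, r_ignore]) Skip (Seq (Call [r_set_flag]) Break))
             (Seq (Try (Call [r_loop]) Skip Skip) (Try (Call [r_back]) Skip Break))"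

definition Check :: cmd where
  "Check = If (Call [r_flag]) Fail Skip"

definition is_dag :: cmd where
  "is_dag = Seq (Loop (Seq (Call [r_init]) (Seq (Loop DFS) (Try (Call [r_unroot]) Skip Break)))) Check"

end

theory Submission
  imports Defs
begin

(* Under the invariant maintained by is-dag (at most one root, dashed edges form the DFS path:
   they point to visited nodes and no node has two incoming dashed non-loop edges) every list the
   compiled matcher walks has at most one relevant element, so every rule call costs O(1).
   The potential  #unmarked edges + 2 * #grey nodes + #red nodes  never increases, and strictly
   decreases in every iteration of both loops that does not terminate the loop.  An amortised loop
   rule therefore bounds the total cost linearly in the initial potential, which is at most
   m + 2n. *)

section \<open>Cost semantics as a total-correctness logic\<close>

lemma exec_Suc: "exec f C s = Some x \<Longrightarrow> exec (Suc f) C s = Some x"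
proof (induction f arbitrary: C s x)
  case 0
  then show ?case by simp
next
  case (Suc f)
  \<comment> \<open>Naming \<open>Suc f\<close> keeps the simplifier from unfolding the recursive calls.\<close>
  define g where "g = Suc f"
  have IH: "exec g C' s' = exec f C' s'" if "exec f C' s' \<noteq> None" for C' s'
    using Suc.IH that unfolding g_def by fastforce
  show ?case
    unfolding g_def[symmetric] using Suc.prems
    by (cases C) (auto simp: IH addc_def split: option.splits outcome.splits)
qed

lemma exec_mono: "f \<le> f' \<Longrightarrow> exec f C s = Some x \<Longrightarrow> exec f' C s = Some x"
  by (induction f' rule: dec_induct) (auto intro: exec_Suc)

lemma exec_common_fuel:
  assumes "exec f1 C1 s1 = Some x1" "exec f2 C2 s2 = Some x2"
  obtains f where "exec f C1 s1 = Some x1" "exec f C2 s2 = Some x2"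
  using exec_mono[OF max.cobounded1 assms(1)] exec_mono[OF max.cobounded2 assms(2)] by blast

definition terminates_with :: "hstate \<Rightarrow> cmd \<Rightarrow> (outcome \<Rightarrow> nat \<Rightarrow> bool) \<Rightarrow> bool" where
  "terminates_with s C Q \<longleftrightarrow> (\<exists>f r c. exec f C s = Some (r, c) \<and> Q r c)"

lemma terminates_withI: "exec f C s = Some (r, c) \<Longrightarrow> Q r c \<Longrightarrow> terminates_with s C Q"
  unfolding terminates_with_def by blast

lemma terminates_withE:
  assumes "terminates_with s C Q"
  obtains f r c where "exec f C s = Some (r, c)" "Q r c"
  using assms unfolding terminates_with_def by blast

lemma terminates_with_conseq:
  "terminates_with s C Q \<Longrightarrow> (\<And>r c. Q r c \<Longrightarrow> Q' r c) \<Longrightarrow> terminates_with s C Q'"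
  unfolding terminates_with_def by blast

lemma terminates_with_Skip: "Q (ROk s) 1 \<Longrightarrow> terminates_with s Skip Q"
  by (rule terminates_withI[where f = 1]) simp_all

lemma terminates_with_Break: "Q (RBrk s) 1 \<Longrightarrow> terminates_with s Break Q"
  by (rule terminates_withI[where f = 1]) simp_all

lemma terminates_with_Fail: "Q RFail 1 \<Longrightarrow> terminates_with s Fail Q"
  by (rule terminates_withI[where f = 1]) simp_all

lemma terminates_with_Seq:
  assumes "terminates_with s P Q1"
    and "\<And>s' c. Q1 (ROk s') c \<Longrightarrow> terminates_with s' P' (\<lambda>r c'. Q r (c + c'))"
    and "\<And>c. Q1 RFail c \<Longrightarrow> Q RFail c"
    and "\<And>s' c. Q1 (RBrk s') c \<Longrightarrow> Q (RBrk s') c"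
  shows "terminates_with s (Seq P P') Q"
proof -
  obtain f r c where ex: "exec f P s = Some (r, c)" and q: "Q1 r c"
    using assms(1) by (rule terminates_withE)
  show ?thesis
  proof (cases r)
    case (ROk s')
    obtain f' r' c' where ex': "exec f' P' s' = Some (r', c')" and q': "Q r' (c + c')"
      using assms(2) q ROk by (blast elim: terminates_withE)
    obtain g where "exec g P s = Some (r, c)" "exec g P' s' = Some (r', c')"
      using ex ex' by (rule exec_common_fuel)
    then have "exec (Suc g) (Seq P P') s = Some (r', c + c')"
      using ROk by (simp add: addc_def)
    then show ?thesis using q' by (rule terminates_withI)
  next
    case RFail
    then show ?thesis
      using ex q assms(3) by (intro terminates_withI[where f = "Suc f"]) simp_all
  next
    case (RBrk s')
    then show ?thesis
      using ex q assms(4) by (intro terminates_withI[where f = "Suc f"]) simp_all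
  qed
qed

lemma terminates_with_Try:
  assumes "terminates_with s C Q1"
    and "\<And>s' c. Q1 (ROk s') c \<Longrightarrow> terminates_with s' P (\<lambda>r c'. Q r (Suc c + c'))"
    and "\<And>c. Q1 RFail c \<Longrightarrow> terminates_with s P' (\<lambda>r c'. Q r (Suc (2 * c) + c'))"
    and "\<And>s' c. Q1 (RBrk s') c \<Longrightarrow> Q (RBrk s') (Suc c)"
  shows "terminates_with s (Try C P P') Q"
proof -
  obtain f r c where ex: "exec f C s = Some (r, c)" and q: "Q1 r c"
    using assms(1) by (rule terminates_withE)
  show ?thesis
  proof (cases r)
    case (ROk s')
    obtain f' r' c' where ex': "exec f' P s' = Some (r', c')" and q': "Q r' (Suc c + c')"
      using assms(2) q ROk by (blast elim: terminates_withE)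
    obtain g where "exec g C s = Some (r, c)" "exec g P s' = Some (r', c')"
      using ex ex' by (rule exec_common_fuel)
    then have "exec (Suc g) (Try C P P') s = Some (r', Suc c + c')"
      using ROk by (simp add: addc_def)
    then show ?thesis using q' by (rule terminates_withI)
  next
    case RFail
    obtain f' r' c' where ex': "exec f' P' s = Some (r', c')" and q': "Q r' (Suc (2 * c) + c')"
      using assms(3) q RFail by (blast elim: terminates_withE)
    obtain g where "exec g C s = Some (r, c)" "exec g P' s = Some (r', c')"
      using ex ex' by (rule exec_common_fuel)
    then have "exec (Suc g) (Try C P P') s = Some (r', Suc (2 * c) + c')"
      using RFail by (simp add: addc_def)
    then show ?thesis using q' by (rule terminates_withI)
  next
    case (RBrk s')
    then show ?thesis
      using ex q assms(4) by (intro terminates_withI[where f = "Suc f"]) simp_all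
  qed
qed

lemma terminates_with_If:
  assumes "terminates_with s C Q1"
    and "\<And>r c. Q1 r c \<Longrightarrow> r \<noteq> RFail \<Longrightarrow> terminates_with s P (\<lambda>r c'. Q r (Suc (2 * c) + c'))"
    and "\<And>c. Q1 RFail c \<Longrightarrow> terminates_with s P' (\<lambda>r c'. Q r (Suc (2 * c) + c'))"
  shows "terminates_with s (If C P P') Q"
proof -
  obtain f r c where ex: "exec f C s = Some (r, c)" and q: "Q1 r c"
    using assms(1) by (rule terminates_withE)
  have "terminates_with s (if r = RFail then P' else P) (\<lambda>r' c'. Q r' (Suc (2 * c) + c'))"
    using assms(2,3) q by auto
  then obtain f' r' c' where ex': "exec f' (if r = RFail then P' else P) s = Some (r', c')"
    and q': "Q r' (Suc (2 * c) + c')"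
    by (rule terminates_withE)
  obtain g where "exec g C s = Some (r, c)" "exec g (if r = RFail then P' else P) s = Some (r', c')"
    using ex ex' by (rule exec_common_fuel)
  then have "exec (Suc g) (If C P P') s = Some (r', Suc (2 * c) + c')"
    by (cases r) (simp_all add: addc_def)
  then show ?thesis using q' by (rule terminates_withI)
qed

text \<open>Amortised loop rule: a continuing iteration costs at most \<open>B + 1\<close> plus \<open>K\<close> per unit
  drop of \<open>pot\<close>, and \<open>pot\<close> drops by at least one, so \<open>(K + B + 1) * pot\<close> pays for it.
  The last iteration breaks or fails, and a failed body is charged twice: hence \<open>2 * B + 1\<close>.\<close>

lemma terminates_with_Loop:
  fixes pot :: "hstate \<Rightarrow> nat"
  assumes body: "\<And>s. I s \<Longrightarrow> terminates_with s P (\<lambda>r c. case r of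
        ROk s' \<Rightarrow> I s' \<and> pot s' < pot s \<and> c + K * pot s' \<le> K * pot s + B
      | RBrk s' \<Rightarrow> J s' \<and> pot s' \<le> pot s \<and> c + K * pot s' \<le> K * pot s + B
      | RFail \<Rightarrow> J s \<and> c \<le> B)"
  shows "I s \<Longrightarrow> terminates_with s (Loop P) (\<lambda>r c. \<exists>s'. r = ROk s' \<and> J s' \<and> pot s' \<le> pot s \<and>
            c + (K + B + 1) * pot s' \<le> (K + B + 1) * pot s + (2 * B + 1))"
proof (induction "pot s" arbitrary: s rule: less_induct)
  case less
  obtain f r c where ex: "exec f P s = Some (r, c)" and q: "case r of
        ROk s' \<Rightarrow> I s' \<and> pot s' < pot s \<and> c + K * pot s' \<le> K * pot s + B
      | RBrk s' \<Rightarrow> J s' \<and> pot s' \<le> pot s \<and> c + K * pot s' \<le> K * pot s + B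
      | RFail \<Rightarrow> J s \<and> c \<le> B"
    using body[OF less.prems] by (rule terminates_withE)
  show ?case
  proof (cases r)
    case (ROk s')
    with q have I': "I s'" and lt: "pot s' < pot s" and c: "c + K * pot s' \<le> K * pot s + B"
      by auto
    obtain f' r' c' s'' where ex': "exec f' (Loop P) s' = Some (r', c')" and r': "r' = ROk s''"
      and J: "J s''" and le: "pot s'' \<le> pot s'"
      and c': "c' + (K + B + 1) * pot s'' \<le> (K + B + 1) * pot s' + (2 * B + 1)"
      using less.hyps[OF lt I'] by (blast elim: terminates_withE)
    obtain g where "exec g P s = Some (r, c)" "exec g (Loop P) s' = Some (r', c')"
      using ex ex' by (rule exec_common_fuel)
    then have run: "exec (Suc g) (Loop P) s = Some (r', Suc c + c')"
      using ROk by (simp add: addc_def)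
    obtain d where "pot s = pot s' + Suc d"
      using lt less_iff_Suc_add by auto
    then have "Suc c + c' + (K + B + 1) * pot s'' \<le> (K + B + 1) * pot s + (2 * B + 1)"
      using c c' by (simp add: algebra_simps)
    then show ?thesis
      using r' J le lt by (intro terminates_withI[OF run]) auto
  next
    case (RBrk s')
    with q have "J s'" "pot s' \<le> pot s" "c + K * pot s' \<le> K * pot s + B"
      by auto
    moreover have "(B + 1) * pot s' \<le> (B + 1) * pot s"
      using \<open>pot s' \<le> pot s\<close> by (rule mult_le_mono2)
    ultimately show ?thesis
      using ex RBrk by (intro terminates_withI[where f = "Suc f"]) (auto simp: algebra_simps)
  next
    case RFail
    then show ?thesis
      using ex q by (intro terminates_withI[where f = "Suc f"]) auto
  qed
qed

lemma find_SomeD: "fst (find f xs) = Some y \<Longrightarrow> \<exists>x\<in>set xs. fst (f x) = Some y"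
  by (induction xs) (auto split: option.splits prod.splits)

lemma find_cost_le:
  assumes "\<forall>x\<in>set xs. snd (f x) \<le> k" and "length xs \<le> 1 \<or> fst (f (hd xs)) \<noteq> None"
  shows "snd (find f xs) \<le> k + 2"
  using assms by (cases xs) (auto split: option.splits prod.splits)

lemma nested_find_cost_le:
  assumes "length xs \<le> 1" and "\<And>x. x \<in> set xs \<Longrightarrow> P x \<Longrightarrow> snd (find (g x) (ys x)) \<le> k"
  shows "snd (find (\<lambda>x. if P x then (case find (g x) (ys x) of (r, c) \<Rightarrow> (r, Suc c)) else (None, 1)) xs)
    \<le> k + 3"
  using assms by (intro order_trans[OF find_cost_le[where k = "k + 1"]]) (auto simp: case_prod_beta)

lemma apply_m_SomeD: "fst (apply_m x g) = Some s' \<Longrightarrow> \<exists>m. fst x = Some m \<and> s' = g m"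
  by (cases "(x, g)" rule: apply_m.cases) auto

lemma apply_m_cost_le: "snd x \<le> k \<Longrightarrow> snd (apply_m x g) \<le> k + 1"
  by (cases "(x, g)" rule: apply_m.cases) auto

lemma apply_rs_SomeD: "fst (apply_rs rs s) = Some s' \<Longrightarrow> \<exists>r\<in>set rs. fst (r s) = Some s'"
  by (induction rs) (auto split: option.splits prod.splits)

lemma apply_rs_cost_le: "(\<And>r. r \<in> set rs \<Longrightarrow> snd (r s) \<le> k) \<Longrightarrow> snd (apply_rs rs s) \<le> length rs * k"
proof (induction rs)
  case (Cons r rs)
  then show ?case
    by (fastforce split: option.splits prod.splits)
qed simp

definition call_post :: "nat \<Rightarrow> (hstate \<Rightarrow> bool) \<Rightarrow> outcome \<Rightarrow> nat \<Rightarrow> bool" where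
  "call_post b P r c \<longleftrightarrow> c \<le> b \<and> (case r of ROk s' \<Rightarrow> P s' | RFail \<Rightarrow> True | RBrk _ \<Rightarrow> False)"

lemma terminates_with_Call:
  assumes "\<And>r. r \<in> set rs \<Longrightarrow> snd (r s) \<le> k"
    and "\<And>r s'. r \<in> set rs \<Longrightarrow> fst (r s) = Some s' \<Longrightarrow> P s'"
    and "Suc (length rs * k) \<le> b"
  shows "terminates_with s (Call rs) (call_post b P)"
proof -
  obtain x c where rs: "apply_rs rs s = (x, c)"
    by fastforce
  then have run: "exec 1 (Call rs) s = Some (case x of Some s' \<Rightarrow> ROk s' | None \<Rightarrow> RFail, Suc c)"
    by (cases x) simp_all
  show ?thesis
    using apply_rs_cost_le[of rs s k] apply_rs_SomeD[of rs s] assms rs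
    by (intro terminates_withI[OF run]) (auto simp: call_post_def split: option.splits)
qed

lemma set_nmark_simps [simp]:
  "V (set_nmark v k s) = V s" "E (set_nmark v k s) = E s" "src (set_nmark v k s) = src s"
  "tgt (set_nmark v k s) = tgt s" "emk (set_nmark v k s) = emk s" "rt (set_nmark v k s) = rt s"
  "rlist (set_nmark v k s) = rlist s" "elist (set_nmark v k s) = elist s"
  "nmk (set_nmark v k s) = (nmk s)(v := k)"
  by (simp_all add: set_nmark_def)

lemma set_root_simps [simp]:
  "V (set_root v b s) = V s" "E (set_root v b s) = E s" "src (set_root v b s) = src s"
  "tgt (set_root v b s) = tgt s" "emk (set_root v b s) = emk s" "rt (set_root v b s) = (rt s)(v := b)"
  "nlist (set_root v b s) = nlist s" "elist (set_root v b s) = elist s"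
  "nmk (set_root v b s) = nmk s"
  by (simp_all add: set_root_def)

lemma set_emark_simps [simp]:
  "V (set_emark e k s) = V s" "E (set_emark e k s) = E s" "src (set_emark e k s) = src s"
  "tgt (set_emark e k s) = tgt s" "emk (set_emark e k s) = (emk s)(e := k)" "rt (set_emark e k s) = rt s"
  "nlist (set_emark e k s) = nlist s" "rlist (set_emark e k s) = rlist s"
  "nmk (set_emark e k s) = nmk s"
  by (simp_all add: set_emark_def Let_def)

lemma valid_rep_set_nmark: "valid_rep s \<Longrightarrow> v \<in> V s \<Longrightarrow> valid_rep (set_nmark v k s)"
  unfolding valid_rep_def by (simp add: set_nmark_def) (auto simp: distinct_removeAll)

lemma valid_rep_set_root: "valid_rep s \<Longrightarrow> v \<in> V s \<Longrightarrow> valid_rep (set_root v b s)"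
  unfolding valid_rep_def by (simp add: set_root_def) (auto simp: distinct_removeAll)

lemma valid_rep_set_emark: "valid_rep s \<Longrightarrow> e \<in> E s \<Longrightarrow> valid_rep (set_emark e k s)"
  unfolding valid_rep_def by (simp add: set_emark_def Let_def modl_def) (auto simp: distinct_removeAll)

lemma valid_rep_edge_ends: "valid_rep s \<Longrightarrow> e \<in> E s \<Longrightarrow> src s e \<in> V s \<and> tgt s e \<in> V s"
  by (simp add: valid_rep_def)

lemma set_rlist: "valid_rep s \<Longrightarrow> set (rlist s) = {v \<in> V s. rt s v}"
  unfolding valid_rep_def by blast

lemma set_nlist: "valid_rep s \<Longrightarrow> set (nlist s k) = {v \<in> V s. nmk s v = k}"
  unfolding valid_rep_def by blast

lemma set_elist_out: "valid_rep s \<Longrightarrow> v \<in> V s \<Longrightarrow>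
    set (elist s v k OutE) = {e \<in> E s. src s e = v \<and> tgt s e \<noteq> v \<and> emk s e = k}"
  unfolding valid_rep_def by blast

lemma set_elist_in: "valid_rep s \<Longrightarrow> v \<in> V s \<Longrightarrow>
    set (elist s v k InE) = {e \<in> E s. tgt s e = v \<and> src s e \<noteq> v \<and> emk s e = k}"
  unfolding valid_rep_def by blast

lemma distinct_length_le_1:
  assumes "distinct xs" and "\<forall>x\<in>set xs. \<forall>y\<in>set xs. x = y"
  shows "length xs \<le> 1"
  using assms card_le_Suc0_iff_eq[of "set xs"] by (simp add: distinct_card)

section \<open>The DFS invariant\<close>

definition single_root :: "hstate \<Rightarrow> bool" where
  "single_root s \<longleftrightarrow> (\<forall>u\<in>V s. \<forall>v\<in>V s. rt s u \<longrightarrow> rt s v \<longrightarrow> u = v)"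

definition dashed_targets_visited :: "hstate \<Rightarrow> bool" where
  "dashed_targets_visited s \<longleftrightarrow> (\<forall>e\<in>E s. emk s e = EDashed \<longrightarrow> nmk s (tgt s e) \<noteq> NGrey)"

definition dashed_in_unique :: "hstate \<Rightarrow> bool" where
  "dashed_in_unique s \<longleftrightarrow> (\<forall>e1\<in>E s. \<forall>e2\<in>E s.
     emk s e1 = EDashed \<longrightarrow> emk s e2 = EDashed \<longrightarrow> src s e1 \<noteq> tgt s e1 \<longrightarrow> src s e2 \<noteq> tgt s e2 \<longrightarrow>
     tgt s e1 = tgt s e2 \<longrightarrow> e1 = e2)"

definition dfs_inv :: "hstate \<Rightarrow> bool" where
  "dfs_inv s \<longleftrightarrow> valid_rep s \<and> single_root s \<and> dashed_targets_visited s \<and> dashed_in_unique s"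

definition red_edge_unique :: "hstate \<Rightarrow> bool" where
  "red_edge_unique s \<longleftrightarrow> (\<forall>e1\<in>E s. \<forall>e2\<in>E s. emk s e1 = ERed \<longrightarrow> emk s e2 = ERed \<longrightarrow> e1 = e2)"

definition no_red_edge :: "hstate \<Rightarrow> bool" where
  "no_red_edge s \<longleftrightarrow> (\<forall>e\<in>E s. emk s e \<noteq> ERed)"

definition no_red_root :: "hstate \<Rightarrow> bool" where
  "no_red_root s \<longleftrightarrow> (\<forall>v\<in>V s. rt s v \<longrightarrow> nmk s v \<noteq> NRed)"

definition no_root :: "hstate \<Rightarrow> bool" where
  "no_root s \<longleftrightarrow> (\<forall>v\<in>V s. \<not> rt s v)"

lemma single_root_set_nmark [simp]: "single_root (set_nmark v k s) = single_root s"
  and single_root_set_emark [simp]: "single_root (set_emark e k' s) = single_root s"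
  by (simp_all add: single_root_def)

lemma dashed_targets_visited_set_root [simp]:
  "dashed_targets_visited (set_root v b s) = dashed_targets_visited s"
  by (simp add: dashed_targets_visited_def)

lemma dashed_in_unique_set_root [simp]: "dashed_in_unique (set_root v b s) = dashed_in_unique s"
  and dashed_in_unique_set_nmark [simp]: "dashed_in_unique (set_nmark v k s) = dashed_in_unique s"
  by (simp_all add: dashed_in_unique_def)

lemma dashed_targets_visited_set_nmark:
  "dashed_targets_visited s \<Longrightarrow> k \<noteq> NGrey \<Longrightarrow> dashed_targets_visited (set_nmark v k s)"
  by (simp add: dashed_targets_visited_def)

lemma dashed_targets_visited_set_emark:
  "dashed_targets_visited s \<Longrightarrow> k \<noteq> EDashed \<Longrightarrow> dashed_targets_visited (set_emark e k s)"
  by (simp add: dashed_targets_visited_def)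

lemma dashed_in_unique_set_emark:
  "dashed_in_unique s \<Longrightarrow> k \<noteq> EDashed \<Longrightarrow> dashed_in_unique (set_emark e k s)"
  by (simp add: dashed_in_unique_def)

lemma dfs_inv_set_nmark: "dfs_inv s \<Longrightarrow> v \<in> V s \<Longrightarrow> k \<noteq> NGrey \<Longrightarrow> dfs_inv (set_nmark v k s)"
  by (simp add: dfs_inv_def dashed_targets_visited_set_nmark valid_rep_set_nmark)

lemma dfs_inv_set_emark: "dfs_inv s \<Longrightarrow> e \<in> E s \<Longrightarrow> k \<noteq> EDashed \<Longrightarrow> dfs_inv (set_emark e k s)"
  by (simp add: dfs_inv_def dashed_targets_visited_set_emark dashed_in_unique_set_emark
      valid_rep_set_emark)

lemma dfs_inv_set_emark_dashed:
  assumes "dfs_inv s" "e \<in> E s" "nmk s (tgt s e) \<noteq> NGrey"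
    and "\<forall>e'\<in>E s. emk s e' = EDashed \<longrightarrow> tgt s e' \<noteq> tgt s e"
  shows "dfs_inv (set_emark e EDashed s)"
  using assms unfolding dfs_inv_def dashed_targets_visited_def dashed_in_unique_def
  by (auto simp: valid_rep_set_emark)

lemma dfs_inv_unroot:
  assumes "dfs_inv s" "v \<in> V s"
  shows "dfs_inv (set_root v False s)"
proof -
  have "single_root (set_root v False s)"
    using assms(1) unfolding dfs_inv_def single_root_def by simp
  then show ?thesis
    using assms unfolding dfs_inv_def by (simp add: valid_rep_set_root)
qed

lemma dfs_inv_set_root:
  assumes "dfs_inv s" "v \<in> V s" "\<forall>u\<in>V s. rt s u \<longrightarrow> u = v"
  shows "dfs_inv (set_root v True s)"
proof -
  have "single_root (set_root v True s)"
    using assms(3) unfolding single_root_def set_root_simps fun_upd_apply by metis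
  then show ?thesis
    using assms unfolding dfs_inv_def by (simp add: valid_rep_set_root)
qed

lemma dfs_inv_root_unique: "dfs_inv s \<Longrightarrow> u \<in> V s \<Longrightarrow> v \<in> V s \<Longrightarrow> rt s u \<Longrightarrow> rt s v \<Longrightarrow> u = v"
  unfolding dfs_inv_def single_root_def by blast

lemma length_rlist_le_1: "dfs_inv s \<Longrightarrow> length (rlist s) \<le> 1"
  using set_rlist[of s] unfolding dfs_inv_def single_root_def valid_rep_def
  by (intro distinct_length_le_1) auto

lemma length_red_out_le_1:
  "valid_rep s \<Longrightarrow> red_edge_unique s \<Longrightarrow> v \<in> V s \<Longrightarrow> length (elist s v ERed OutE) \<le> 1"
  using set_elist_out[of s v ERed] unfolding red_edge_unique_def valid_rep_def
  by (intro distinct_length_le_1) auto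

lemma length_dashed_in_le_1: "dfs_inv s \<Longrightarrow> v \<in> V s \<Longrightarrow> length (elist s v EDashed InE) \<le> 1"
  using set_elist_in[of s v EDashed] unfolding dfs_inv_def dashed_in_unique_def valid_rep_def
  by (intro distinct_length_le_1) auto

definition outer_state :: "hstate \<Rightarrow> bool" where
  "outer_state s \<longleftrightarrow> dfs_inv s \<and> no_root s \<and> no_red_edge s"

definition dfs_state :: "hstate \<Rightarrow> bool" where
  "dfs_state s \<longleftrightarrow> dfs_inv s \<and> no_red_edge s"

text \<open>After \<open>set_flag\<close> a red edge remains, but the root is green, so \<open>unroot\<close> cannot
  match.\<close>

definition dfs_exit_state :: "hstate \<Rightarrow> bool" where
  "dfs_exit_state s \<longleftrightarrow> dfs_inv s \<and> (no_red_edge s \<or> no_red_root s)"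

lemma dfs_state_exit: "dfs_state s \<Longrightarrow> dfs_exit_state s"
  by (simp add: dfs_state_def dfs_exit_state_def)

lemma initial_outer_state:
  assumes "valid_rep s" "\<forall>v\<in>V s. nmk s v = NGrey \<and> \<not> rt s v" "\<forall>e\<in>E s. emk s e = EUnm"
  shows "outer_state s"
  using assms
  by (simp add: outer_state_def dfs_inv_def single_root_def dashed_targets_visited_def
      dashed_in_unique_def no_root_def no_red_edge_def)

section \<open>The potential\<close>

text \<open>A grey node is still to be reached (turning red) and then left (turning blue or green),
  a red node only to be left; each unmarked edge is still to be marked red.\<close>

definition node_weight :: "nmark \<Rightarrow> nat" where
  "node_weight k = (case k of NGrey \<Rightarrow> 2 | NRed \<Rightarrow> 1 | _ \<Rightarrow> 0)"

definition edge_weight :: "emark \<Rightarrow> nat" where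
  "edge_weight k = (if k = EUnm then 1 else 0)"

definition potential :: "hstate \<Rightarrow> nat" where
  "potential s = (\<Sum>e\<in>E s. edge_weight (emk s e)) + (\<Sum>v\<in>V s. node_weight (nmk s v))"

lemma sum_fun_upd_add:
  fixes g :: "'b \<Rightarrow> 'c::comm_monoid_add"
  assumes "finite A" "x \<in> A"
  shows "(\<Sum>y\<in>A. g ((f(x := b)) y)) + g (f x) = (\<Sum>y\<in>A. g (f y)) + g b"
proof -
  have "(\<Sum>y\<in>A. g ((f(x := b)) y)) = g b + (\<Sum>y\<in>A - {x}. g (f y))"
    using assms by (simp add: sum.remove)
  moreover have "(\<Sum>y\<in>A. g (f y)) = g (f x) + (\<Sum>y\<in>A - {x}. g (f y))"
    using assms by (simp add: sum.remove)
  ultimately show ?thesis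
    by (simp add: ac_simps)
qed

lemma potential_set_root [simp]: "potential (set_root v b s) = potential s"
  by (simp add: potential_def)

lemma potential_set_nmark:
  "valid_rep s \<Longrightarrow> v \<in> V s \<Longrightarrow>
   potential (set_nmark v k s) + node_weight (nmk s v) = potential s + node_weight k"
  unfolding potential_def valid_rep_def
  using sum_fun_upd_add[of "V s" v node_weight "nmk s" k] by simp

lemma potential_set_emark:
  "valid_rep s \<Longrightarrow> e \<in> E s \<Longrightarrow>
   potential (set_emark e k s) + edge_weight (emk s e) = potential s + edge_weight k"
  unfolding potential_def valid_rep_def
  using sum_fun_upd_add[of "E s" e edge_weight "emk s" k] by simp

lemma potential_le: "potential s \<le> card (E s) + 2 * card (V s)"
proof -
  have "(\<Sum>e\<in>E s. edge_weight (emk s e)) \<le> card (E s)"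
    using sum_bounded_above[of "E s" "\<lambda>e. edge_weight (emk s e)" 1] by (simp add: edge_weight_def)
  moreover have "node_weight k \<le> 2" for k
    by (cases k) (simp_all add: node_weight_def)
  then have "(\<Sum>v\<in>V s. node_weight (nmk s v)) \<le> 2 * card (V s)"
    using sum_bounded_above[of "V s" "\<lambda>v. node_weight (nmk s v)" 2] by (simp add: mult.commute)
  ultimately show ?thesis
    by (simp add: potential_def)
qed

lemma root_with_cost_le: "length (rlist s) \<le> 1 \<Longrightarrow> snd (root_with k s) \<le> 3"
  unfolding root_with_def by (rule order_trans[OF find_cost_le[where k = 1]]) auto

lemma red_root_out_cost_le:
  assumes "valid_rep s" "length (rlist s) \<le> 1"
    and "\<And>v. v \<in> V s \<Longrightarrow> length (elist s v ek OutE) \<le> 1 \<or> (\<forall>w. P w)"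
  shows "snd (red_root_out ek P s) \<le> 6"
proof -
  have "length (elist s v ek OutE) \<le> 1 \<or>
      tgt s (hd (elist s v ek OutE)) \<noteq> v \<and> P (tgt s (hd (elist s v ek OutE)))"
    if "v \<in> set (rlist s)" for v
  proof -
    have v: "v \<in> V s"
      using that set_rlist[OF assms(1)] by blast
    show ?thesis
      using assms(3)[OF v] set_elist_out[OF assms(1) v] hd_in_set[of "elist s v ek OutE"] by fastforce
  qed
  then show ?thesis
    unfolding red_root_out_def
    by (intro order_trans[OF nested_find_cost_le[OF assms(2)]] order_trans[OF find_cost_le[where k = 1]])
      auto
qed

lemma rule_cost_le:
  assumes "dfs_inv s"
  shows "snd (r_init s) \<le> 7" "snd (r_unroot s) \<le> 7" "snd (r_set_flag s) \<le> 7" "snd (r_flag s) \<le> 7"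
    "snd (r_next_edge s) \<le> 7" "snd (r_back s) \<le> 7" "snd (r_loop s) \<le> 7"
proof -
  have valid: "valid_rep s" and roots: "length (rlist s) \<le> 1"
    using assms length_rlist_le_1 unfolding dfs_inv_def by auto
  show "snd (r_init s) \<le> 7"
    unfolding r_init_def by (intro le_trans[OF apply_m_cost_le[OF find_cost_le[where k = 1]]]) auto
  show "snd (r_unroot s) \<le> 7" "snd (r_set_flag s) \<le> 7" "snd (r_flag s) \<le> 7"
    unfolding r_unroot_def r_set_flag_def r_flag_def
    by (rule le_trans[OF apply_m_cost_le[OF root_with_cost_le[OF roots]]], simp)+
  show "snd (r_next_edge s) \<le> 7"
    unfolding r_next_edge_def
    by (rule le_trans[OF apply_m_cost_le[OF red_root_out_cost_le[OF valid roots]]]) simp_all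
  show "snd (r_back s) \<le> 7"
    unfolding r_back_def using set_rlist[OF valid] length_dashed_in_le_1[OF assms]
    by (intro le_trans[OF apply_m_cost_le[OF nested_find_cost_le[OF roots]]]
        order_trans[OF find_cost_le[where k = 1]]) auto
  show "snd (r_loop s) \<le> 7"
    unfolding r_loop_def
    by (intro le_trans[OF apply_m_cost_le[OF nested_find_cost_le[OF roots]]]
        order_trans[OF find_cost_le[where k = 1]]) auto
qed

lemma move_ignore_cost_le:
  assumes "dfs_inv s" "red_edge_unique s"
  shows "snd (r_move s) \<le> 7" "snd (r_ignore s) \<le> 7"
proof -
  have red_out: "snd (red_root_out ERed P s) \<le> 6" for P
    using assms length_red_out_le_1 length_rlist_le_1
    by (intro red_root_out_cost_le) (auto simp: dfs_inv_def)
  show "snd (r_move s) \<le> 7"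
    unfolding r_move_def by (rule le_trans[OF apply_m_cost_le[OF red_out]]) simp
  show "snd (r_ignore s) \<le> 7"
    unfolding r_ignore_def by (rule le_trans[OF apply_m_cost_le[OF red_out]]) simp
qed

lemma root_with_SomeD:
  "valid_rep s \<Longrightarrow> fst (root_with k s) = Some v \<Longrightarrow> v \<in> V s \<and> rt s v \<and> nmk s v = k"
  unfolding root_with_def using set_rlist[of s] by (fastforce dest!: find_SomeD split: if_splits)

lemma red_root_out_SomeD:
  assumes "valid_rep s" "fst (red_root_out ek P s) = Some (v, e)"
  shows "v \<in> V s \<and> rt s v \<and> nmk s v = NRed \<and> e \<in> E s \<and> src s e = v \<and> tgt s e \<noteq> v
         \<and> emk s e = ek \<and> P (tgt s e)"
proof -
  obtain u where "u \<in> set (rlist s)" and u: "fst (if nmk s u = NRed then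
        (case find (\<lambda>e. (if tgt s e \<noteq> u \<and> P (tgt s e) then Some (u, e) else None, 1))
                   (elist s u ek OutE) of (r, c) \<Rightarrow> (r, Suc c))
      else (None, 1)) = Some (v, e)"
    using find_SomeD assms(2) unfolding red_root_out_def by fastforce
  then have "u \<in> V s" "rt s u" "nmk s u = NRed"
    using set_rlist[OF assms(1)] by (auto split: if_splits)
  moreover obtain e' where "e' \<in> set (elist s u ek OutE)"
    "(if tgt s e' \<noteq> u \<and> P (tgt s e') then Some (u, e') else None) = Some (v, e)"
    using u find_SomeD \<open>nmk s u = NRed\<close> by (fastforce simp: case_prod_beta)
  ultimately show ?thesis
    using set_elist_out[OF assms(1) \<open>u \<in> V s\<close>] by (auto split: if_splits)
qed

lemma r_init_step:
  assumes "outer_state s" "fst (r_init s) = Some s'"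
  shows "dfs_state s' \<and> potential s' < potential s"
proof -
  have inv: "dfs_inv s" and valid: "valid_rep s"
    using assms(1) by (auto simp: outer_state_def dfs_inv_def)
  obtain x where "x \<in> set (nlist s NGrey)" and s': "s' = set_root x True (set_nmark x NRed s)"
    using assms(2) find_SomeD unfolding r_init_def by (fastforce dest!: apply_m_SomeD)
  then have x: "x \<in> V s" "nmk s x = NGrey"
    using set_nlist[OF valid] by auto
  have "dfs_inv s'"
    unfolding s' using assms(1) x
    by (intro dfs_inv_set_root dfs_inv_set_nmark[OF inv]) (auto simp: outer_state_def no_root_def)
  moreover have "no_red_edge s'"
    using assms(1) unfolding s' outer_state_def no_red_edge_def by simp
  moreover have "potential s' < potential s"
    using potential_set_nmark[OF valid x(1), of NRed] x(2) unfolding s' by (simp add: node_weight_def)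
  ultimately show ?thesis
    by (simp add: dfs_state_def)
qed

lemma r_next_edge_step:
  assumes "dfs_state s" "fst (r_next_edge s) = Some s'"
  shows "dfs_inv s' \<and> red_edge_unique s' \<and> potential s' < potential s"
proof -
  have inv: "dfs_inv s" and valid: "valid_rep s"
    using assms(1) by (auto simp: dfs_state_def dfs_inv_def)
  obtain v e where "fst (red_root_out EUnm (\<lambda>w. True) s) = Some (v, e)" and s': "s' = set_emark e ERed s"
    using assms(2) unfolding r_next_edge_def by (fastforce dest!: apply_m_SomeD)
  then have e: "e \<in> E s" "emk s e = EUnm"
    using red_root_out_SomeD[OF valid] by blast+
  have "dfs_inv s'"
    unfolding s' using dfs_inv_set_emark[OF inv e(1)] by simp
  moreover have "red_edge_unique s'"
    using assms(1) unfolding s' dfs_state_def no_red_edge_def red_edge_unique_def by auto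
  moreover have "potential s' < potential s"
    using potential_set_emark[OF valid e(1), of ERed] e(2) unfolding s' by (simp add: edge_weight_def)
  ultimately show ?thesis
    by blast
qed

lemma r_move_step:
  assumes "dfs_inv s" "red_edge_unique s" "fst (r_move s) = Some s'"
  shows "dfs_state s' \<and> potential s' \<le> potential s"
proof -
  have valid: "valid_rep s"
    using assms(1) by (simp add: dfs_inv_def)
  obtain v e where "fst (red_root_out ERed (\<lambda>w. nmk s w = NGrey) s) = Some (v, e)"
    and s': "s' = set_emark e EDashed
                    (set_root (tgt s e) True (set_nmark (tgt s e) NRed (set_root v False s)))"
    using assms(3) unfolding r_move_def by (fastforce dest!: apply_m_SomeD)
  then have v: "v \<in> V s" "rt s v" and e: "e \<in> E s" "emk s e = ERed"
    and grey: "nmk s (tgt s e) = NGrey"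
    using red_root_out_SomeD[OF valid] by blast+
  define t where "t = tgt s e"
  define s1 where "s1 = set_root t True (set_nmark t NRed (set_root v False s))"
  have t: "t \<in> V s"
    using valid_rep_edge_ends[OF valid e(1)] by (simp add: t_def)
  have "\<forall>u\<in>V s. rt s u \<longrightarrow> u = v"
    using dfs_inv_root_unique[OF assms(1) _ v(1) _ v(2)] by blast
  then have inv1: "dfs_inv s1"
    unfolding s1_def using t grey
    by (intro dfs_inv_set_root dfs_inv_set_nmark dfs_inv_unroot[OF assms(1) v(1)]) auto
  have "dfs_inv s'"
    unfolding s' t_def[symmetric] s1_def[symmetric]
  proof (rule dfs_inv_set_emark_dashed[OF inv1])
    show "\<forall>e'\<in>E s1. emk s1 e' = EDashed \<longrightarrow> tgt s1 e' \<noteq> tgt s1 e"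
      using assms(1) grey unfolding s1_def t_def dfs_inv_def dashed_targets_visited_def by auto
  qed (use e(1) in \<open>auto simp: s1_def t_def\<close>)
  moreover have "no_red_edge s'"
    using assms(2) e unfolding s' red_edge_unique_def no_red_edge_def by auto
  moreover have "potential s' \<le> potential s"
  proof -
    have "potential s' = potential s1"
      using potential_set_emark[of s1 e EDashed] inv1 e unfolding s' t_def[symmetric] s1_def[symmetric]
      by (simp add: s1_def dfs_inv_def edge_weight_def)
    also have "\<dots> < potential s"
      using potential_set_nmark[of "set_root v False s" t NRed] valid_rep_set_root[OF valid v(1)] t grey
      by (simp add: s1_def t_def node_weight_def)
    finally show ?thesis
      by simp
  qed
  ultimately show ?thesis
    by (simp add: dfs_state_def)
qed

lemma r_ignore_step:
  assumes "dfs_inv s" "red_edge_unique s" "fst (r_ignore s) = Some s'"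
  shows "dfs_state s' \<and> potential s' \<le> potential s"
proof -
  have valid: "valid_rep s"
    using assms(1) by (simp add: dfs_inv_def)
  obtain v e where "fst (red_root_out ERed (\<lambda>w. nmk s w = NBlue) s) = Some (v, e)"
    and s': "s' = set_emark e EBlue s"
    using assms(3) unfolding r_ignore_def by (fastforce dest!: apply_m_SomeD)
  then have e: "e \<in> E s" "emk s e = ERed"
    using red_root_out_SomeD[OF valid] by blast+
  have "dfs_inv s'"
    unfolding s' using dfs_inv_set_emark[OF assms(1) e(1)] by simp
  moreover have "no_red_edge s'"
    using assms(2) e unfolding s' red_edge_unique_def no_red_edge_def by auto
  moreover have "potential s' \<le> potential s"
    using potential_set_emark[OF valid e(1), of EBlue] e(2) unfolding s' by (simp add: edge_weight_def)
  ultimately show ?thesis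
    by (simp add: dfs_state_def)
qed

lemma r_set_flag_step:
  assumes "dfs_inv s" "fst (r_set_flag s) = Some s'"
  shows "dfs_exit_state s' \<and> potential s' \<le> potential s"
proof -
  have valid: "valid_rep s"
    using assms(1) by (simp add: dfs_inv_def)
  obtain v where "fst (root_with NRed s) = Some v" and s': "s' = set_nmark v NGreen s"
    using assms(2) unfolding r_set_flag_def by (fastforce dest!: apply_m_SomeD)
  then have v: "v \<in> V s" "rt s v" "nmk s v = NRed"
    using root_with_SomeD[OF valid] by blast+
  have "dfs_inv s'"
    unfolding s' using dfs_inv_set_nmark[OF assms(1) v(1)] by simp
  moreover have "no_red_root s'"
    using dfs_inv_root_unique[OF assms(1) _ v(1) _ v(2)] unfolding s' no_red_root_def by auto
  moreover have "potential s' \<le> potential s"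
    using potential_set_nmark[OF valid v(1), of NGreen] v(3) unfolding s' by (simp add: node_weight_def)
  ultimately show ?thesis
    by (simp add: dfs_exit_state_def)
qed

lemma r_loop_step:
  assumes "dfs_state s" "fst (r_loop s) = Some s'"
  shows "dfs_state s' \<and> potential s' \<le> potential s"
proof -
  have inv: "dfs_inv s" and valid: "valid_rep s"
    using assms(1) by (auto simp: dfs_state_def dfs_inv_def)
  obtain v where "v \<in> set (rlist s)" "nmk s v = NRed" and s': "s' = set_nmark v NGreen s"
    using assms(2) unfolding r_loop_def
    by (fastforce dest!: apply_m_SomeD find_SomeD simp: case_prod_beta split: if_splits)
  then have v: "v \<in> V s" "nmk s v = NRed"
    using set_rlist[OF valid] by auto
  have "dfs_inv s'"
    unfolding s' using dfs_inv_set_nmark[OF inv v(1)] by simp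
  moreover have "no_red_edge s'"
    using assms(1) unfolding s' dfs_state_def no_red_edge_def by simp
  moreover have "potential s' \<le> potential s"
    using potential_set_nmark[OF valid v(1), of NGreen] v(2) unfolding s' by (simp add: node_weight_def)
  ultimately show ?thesis
    by (simp add: dfs_state_def)
qed

lemma r_back_step:
  assumes "dfs_state s" "fst (r_back s) = Some s'"
  shows "dfs_state s' \<and> potential s' < potential s"
proof -
  have inv: "dfs_inv s" and valid: "valid_rep s"
    using assms(1) by (auto simp: dfs_state_def dfs_inv_def)
  obtain w e where "w \<in> set (rlist s)" "nmk s w = NRed" "e \<in> set (elist s w EDashed InE)"
    and s': "s' = set_emark e EBlue
                    (set_root w False (set_nmark w NBlue (set_root (src s e) True s)))"
    using assms(2) unfolding r_back_def
    by (fastforce dest!: apply_m_SomeD find_SomeD simp: case_prod_beta split: if_splits)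
  then have w: "w \<in> V s" "rt s w" "nmk s w = NRed" and e: "e \<in> E s" "emk s e = EDashed"
    using set_rlist[OF valid] set_elist_in[OF valid] by auto
  define v where "v = src s e"
  define s1 where "s1 = set_root w False (set_nmark w NBlue (set_root v True s))"
  have v: "v \<in> V s"
    using valid_rep_edge_ends[OF valid e(1)] by (simp add: v_def)
  have valid1: "valid_rep s1"
    unfolding s1_def using valid v w(1)
    by (intro valid_rep_set_root valid_rep_set_nmark) simp_all
  \<comment> \<open>Between the two root updates both \<open>v\<close> and \<open>w\<close> are roots, so \<open>single_root\<close> is
    checked on \<open>s1\<close> directly.\<close>
  have "single_root s1"
    using dfs_inv_root_unique[OF inv _ w(1) _ w(2)] unfolding s1_def single_root_def by auto
  moreover have "dashed_targets_visited s1" "dashed_in_unique s1"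
    using inv unfolding s1_def dfs_inv_def by (simp_all add: dashed_targets_visited_set_nmark)
  ultimately have "dfs_inv s1"
    using valid1 by (simp add: dfs_inv_def)
  then have "dfs_inv s'"
    unfolding s' v_def[symmetric] s1_def[symmetric] using e(1)
    by (intro dfs_inv_set_emark) (simp_all add: s1_def)
  moreover have "no_red_edge s'"
    using assms(1) unfolding s' dfs_state_def no_red_edge_def by simp
  moreover have "potential s' < potential s"
  proof -
    have "potential s' = potential s1"
      using potential_set_emark[OF valid1, of e EBlue] e unfolding s' v_def[symmetric] s1_def[symmetric]
      by (simp add: s1_def edge_weight_def)
    also have "\<dots> < potential s"
      using potential_set_nmark[of "set_root v True s" w NBlue] valid_rep_set_root[OF valid v] w
      by (simp add: s1_def node_weight_def)
    finally show ?thesis .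
  qed
  ultimately show ?thesis
    by (simp add: dfs_state_def)
qed

lemma r_unroot_step:
  assumes "dfs_exit_state s" "fst (r_unroot s) = Some s'"
  shows "outer_state s' \<and> potential s' < potential s"
proof -
  have inv: "dfs_inv s" and valid: "valid_rep s"
    using assms(1) by (auto simp: dfs_exit_state_def dfs_inv_def)
  obtain v where "fst (root_with NRed s) = Some v" and s': "s' = set_root v False (set_nmark v NBlue s)"
    using assms(2) unfolding r_unroot_def by (fastforce dest!: apply_m_SomeD)
  then have v: "v \<in> V s" "rt s v" "nmk s v = NRed"
    using root_with_SomeD[OF valid] by blast+
  have "dfs_inv s'"
    unfolding s' using v(1) by (intro dfs_inv_unroot dfs_inv_set_nmark[OF inv]) simp_all
  moreover have "no_root s'"
    using dfs_inv_root_unique[OF inv _ v(1) _ v(2)] unfolding s' no_root_def by auto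
  moreover have "no_red_edge s'"
    using assms(1) v unfolding s' dfs_exit_state_def no_red_edge_def no_red_root_def by auto
  moreover have "potential s' < potential s"
    using potential_set_nmark[OF valid v(1), of NBlue] v(3) unfolding s' by (simp add: node_weight_def)
  ultimately show ?thesis
    by (simp add: outer_state_def)
qed

lemma extend_or_flag_terminates:
  assumes "dfs_inv s" "red_edge_unique s"
  shows "terminates_with s (Try (Call [r_move, r_ignore]) Skip (Seq (Call [r_set_flag]) Break))
    (\<lambda>r c. c \<le> 40 \<and> (case r of
        ROk s' \<Rightarrow> dfs_state s' \<and> potential s' \<le> potential s
      | RBrk s' \<Rightarrow> dfs_exit_state s' \<and> potential s' \<le> potential s
      | RFail \<Rightarrow> True))"
proof -
  have extend: "terminates_with s (Call [r_move, r_ignore])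
      (call_post 15 (\<lambda>s'. dfs_state s' \<and> potential s' \<le> potential s))"
    using move_ignore_cost_le[OF assms] r_move_step[OF assms] r_ignore_step[OF assms]
    by (intro terminates_with_Call[where k = 7]) auto
  have flag: "terminates_with s (Call [r_set_flag])
      (call_post 8 (\<lambda>s'. dfs_exit_state s' \<and> potential s' \<le> potential s))"
    using rule_cost_le(3)[OF assms(1)] r_set_flag_step[OF assms(1)]
    by (intro terminates_with_Call[where k = 7]) auto
  show ?thesis
    by (rule terminates_with_Try[OF extend])
      (auto simp: call_post_def
        intro!: terminates_with_Skip terminates_with_Break terminates_with_Seq[OF flag])
qed

lemma backtrack_terminates:
  assumes "dfs_state s"
  shows "terminates_with s (Seq (Try (Call [r_loop]) Skip Skip) (Try (Call [r_back]) Skip Break))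
    (\<lambda>r c. c \<le> 40 \<and> (case r of
        ROk s' \<Rightarrow> dfs_state s' \<and> potential s' < potential s
      | RBrk s' \<Rightarrow> dfs_exit_state s' \<and> potential s' \<le> potential s
      | RFail \<Rightarrow> False))"
proof -
  have inv: "dfs_inv s"
    using assms by (simp add: dfs_state_def)
  have loop_call: "terminates_with s (Call [r_loop])
      (call_post 8 (\<lambda>s'. dfs_state s' \<and> potential s' \<le> potential s))"
    using rule_cost_le(7)[OF inv] r_loop_step[OF assms]
    by (intro terminates_with_Call[where k = 7]) auto
  have back_call: "terminates_with s' (Call [r_back])
      (call_post 8 (\<lambda>s''. dfs_state s'' \<and> potential s'' < potential s'))" if "dfs_state s'" for s'
    using rule_cost_le(6) r_back_step[OF that] that
    by (intro terminates_with_Call[where k = 7]) (auto simp: dfs_state_def)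
  have loop_phase: "terminates_with s (Try (Call [r_loop]) Skip Skip) (\<lambda>r c. c \<le> 18 \<and>
      (case r of ROk s' \<Rightarrow> dfs_state s' \<and> potential s' \<le> potential s | _ \<Rightarrow> False))"
    by (rule terminates_with_Try[OF loop_call])
      (auto simp: call_post_def intro!: terminates_with_Skip assms)
  show ?thesis
    by (rule terminates_with_Seq[OF loop_phase])
      (auto simp: call_post_def intro!: terminates_with_Skip terminates_with_Break
        terminates_with_Try[OF back_call] dfs_state_exit)
qed

lemma DFS_terminates:
  assumes "dfs_state s"
  shows "terminates_with s DFS (\<lambda>r c. c \<le> 60 \<and> (case r of
        ROk s' \<Rightarrow> dfs_state s' \<and> potential s' < potential s
      | RBrk s' \<Rightarrow> dfs_exit_state s' \<and> potential s' \<le> potential s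
      | RFail \<Rightarrow> True))"
proof -
  have inv: "dfs_inv s"
    using assms by (simp add: dfs_state_def)
  have next_edge: "terminates_with s (Call [r_next_edge])
      (call_post 8 (\<lambda>s'. dfs_inv s' \<and> red_edge_unique s' \<and> potential s' < potential s))"
    using rule_cost_le(5)[OF inv] r_next_edge_step[OF assms]
    by (intro terminates_with_Call[where k = 7]) auto
  show ?thesis
    unfolding DFS_def
    by (rule terminates_with_Try[OF next_edge])
      (auto simp: call_post_def split: outcome.splits
        intro!: terminates_with_conseq[OF extend_or_flag_terminates]
          terminates_with_conseq[OF backtrack_terminates[OF assms]])
qed

lemma DFS_loop_terminates:
  assumes "dfs_state s"
  shows "terminates_with s (Loop DFS) (\<lambda>r c. \<exists>s'. r = ROk s' \<and> dfs_exit_state s' \<and>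
    potential s' \<le> potential s \<and> c + 61 * potential s' \<le> 61 * potential s + 121)"
  by (rule terminates_with_conseq[OF terminates_with_Loop[where I = dfs_state and J = dfs_exit_state
          and K = 0 and B = 60, OF _ assms]])
    (auto intro!: terminates_with_conseq[OF DFS_terminates] intro: dfs_state_exit split: outcome.splits)

lemma unroot_terminates:
  assumes "dfs_exit_state s"
  shows "terminates_with s (Try (Call [r_unroot]) Skip Break) (\<lambda>r c. c \<le> 18 \<and> (case r of
        ROk s' \<Rightarrow> outer_state s' \<and> potential s' < potential s
      | RBrk s' \<Rightarrow> dfs_inv s' \<and> potential s' \<le> potential s
      | RFail \<Rightarrow> False))"
proof -
  have inv: "dfs_inv s"
    using assms by (simp add: dfs_exit_state_def)
  have "terminates_with s (Call [r_unroot])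
      (call_post 8 (\<lambda>s'. outer_state s' \<and> potential s' < potential s))"
    using rule_cost_le(2)[OF inv] r_unroot_step[OF assms]
    by (intro terminates_with_Call[where k = 7]) auto
  then show ?thesis
    by (rule terminates_with_Try)
      (auto simp: call_post_def inv intro!: terminates_with_Skip terminates_with_Break)
qed

lemma outer_body_terminates:
  assumes "outer_state s"
  shows "terminates_with s (Seq (Call [r_init]) (Seq (Loop DFS) (Try (Call [r_unroot]) Skip Break)))
    (\<lambda>r c. case r of
        ROk s' \<Rightarrow> outer_state s' \<and> potential s' < potential s \<and>
          c + 61 * potential s' \<le> 61 * potential s + 150
      | RBrk s' \<Rightarrow> dfs_inv s' \<and> potential s' \<le> potential s \<and>
          c + 61 * potential s' \<le> 61 * potential s + 150
      | RFail \<Rightarrow> dfs_inv s \<and> c \<le> 150)"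
proof -
  have inv: "dfs_inv s"
    using assms by (simp add: outer_state_def)
  have "terminates_with s (Call [r_init])
      (call_post 8 (\<lambda>s'. dfs_state s' \<and> potential s' < potential s))"
    using rule_cost_le(1)[OF inv] r_init_step[OF assms]
    by (intro terminates_with_Call[where k = 7]) auto
  then show ?thesis
    by (rule terminates_with_Seq)
      (auto simp: call_post_def inv split: outcome.splits
        intro!: terminates_with_Seq[OF DFS_loop_terminates]
          terminates_with_conseq[OF unroot_terminates])
qed

lemma Check_terminates: "dfs_inv s \<Longrightarrow> terminates_with s Check (\<lambda>r c. c \<le> 18)"
  unfolding Check_def using rule_cost_le(4)
  by (intro terminates_with_If[OF terminates_with_Call[where k = 7 and P = "\<lambda>_. True"]])
    (auto simp: call_post_def intro!: terminates_with_Skip terminates_with_Fail)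

lemma is_dag_terminates:
  assumes "outer_state s"
  shows "terminates_with s is_dag (\<lambda>r c. c \<le> 212 * potential s + 319)"
proof -
  have "terminates_with s
      (Loop (Seq (Call [r_init]) (Seq (Loop DFS) (Try (Call [r_unroot]) Skip Break))))
      (\<lambda>r c. \<exists>s'. r = ROk s' \<and> dfs_inv s' \<and> potential s' \<le> potential s \<and>
         c + 212 * potential s' \<le> 212 * potential s + 301)"
    using terminates_with_Loop[where I = outer_state and J = dfs_inv and K = 61 and B = 150,
        OF outer_body_terminates assms] by simp
  then show ?thesis
    unfolding is_dag_def
    by (rule terminates_with_Seq) (auto intro!: terminates_with_conseq[OF Check_terminates])
qed

theorem mainTheorem5:
  shows "\<exists>c::nat. \<forall>s. valid_rep s \<and> (\<forall>v\<in>V s. nmk s v = NGrey \<and> \<not> rt s v)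
            \<and> (\<forall>e\<in>E s. emk s e = EUnm)
         \<longrightarrow> (\<exists>f res t. exec f is_dag s = Some (res, t)
                        \<and> t \<le> c * (card (V s) + card (E s) + 1))"
proof (rule exI[of _ 424], intro allI impI)
  fix s
  assume "valid_rep s \<and> (\<forall>v\<in>V s. nmk s v = NGrey \<and> \<not> rt s v) \<and> (\<forall>e\<in>E s. emk s e = EUnm)"
  then have "terminates_with s is_dag (\<lambda>r c. c \<le> 212 * potential s + 319)"
    by (intro is_dag_terminates initial_outer_state) auto
  then obtain f r t where "exec f is_dag s = Some (r, t)" "t \<le> 212 * potential s + 319"
    by (rule terminates_withE)
  moreover have "212 * potential s + 319 \<le> 424 * (card (V s) + card (E s) + 1)"
    using potential_le[of s] by simp
  ultimately show "\<exists>f res t. exec f is_dag s = Some (res, t) \<and> t \<le> 424 * (card (V s) + card (E s) + 1)"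
    by (meson order_trans)
qed

end
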